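(* Let $Y$ be a mean zero random variable with variance $\sigma^2 \in (0,\infty)$ and moment generating function $m(s)=\mathbb{E}[e^{sY}]$, and let $Y^*$ have the $Y$-zero biased distribution and be defined on the same probability space as $Y$. (a) If $Y^*-Y \le c$ almost surely for some constant $c>0$ and $m(s)$ is finite for all $s\in[0,1/c)$, then for all $t\ge 0$, $$\mathbb{P}(Y\ge t)\le \exp\left(-\frac{t^2}{2(\sigma^2+ct)}\right).$$ The same upper bound holds for $\mathbb{P}(Y\le -t)$, $t \ge 0$, if $Y-Y^*\le c$ almost surely and $m(s)$ is finite for all $s\in(-1/c,0]$. If $|Y^*-Y|\le c$ almost surely for some $c>0$ and $m(s)$ is finite for all $s\in[0,2/c)$, then for all $t\ge0$, $$\mathbb{P}(Y\ge t)\le \exp\left(-\frac{t^2}{10\sigma^2/3+ct}\right),$$ and the same upper bound holds for $\mathbb{P}(Y\le -t)$ if $|Y^*-Y|\le c$ almost surely and $m(s)$ is finite for all $s\in(-2/c,0]$. (b) Let $t>e$ and $\theta=(\log t-\log\log t)/c$. If $Y^*-Y\le c$ almost surely for some constant $c>0$ and $m(\theta)$ is finite, then $$\mathbb{P}(Y\ge t)\le \exp\left(-\frac{t}{c}\left(\log t-\log\log t-\frac{\sigma^2}{c}\right)\right)\le \exp\left(-\frac{t}{2c}\left(\log t-\frac{2\sigma^2}{c}\right)\right).$$ If $Y-Y^*\le c$ almost surely and $m(-\theta)$ is finite, the same bound holds for $\mathbb{P}(Y\le -t)$.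
   Context: Zero bias distribution: for a mean zero random variable $Y$ with finite positive variance $\sigma^2$, a random variable $Y^*$ is said to have the $Y$-zero biased distribution if $\mathbb{E}[Yf(Y)]=\sigma^2\mathbb{E}[f'(Y^* )]$ for all absolutely continuous functions $f$ for which the expectation of either side exists. Such a distribution always exists. "Defined on the same space" means $(Y,Y^* )$ is a coupling, i.e. a pair of random variables on a common probability space with the given marginal laws. *)

theory Defs
  imports "HOL-Probability.Probability"
begin

text \<open>f is absolutely continuous (on every compact interval) with a.e. derivative g:
  f(b) - f(a) is the Lebesgue integral of the locally integrable g over [a,b].\<close>
definition abs_cont_deriv :: "(real \<Rightarrow> real) \<Rightarrow> (real \<Rightarrow> real) \<Rightarrow> bool" where
  "abs_cont_deriv f g \<longleftrightarrow>
     (\<forall>a b. a \<le> b \<longrightarrow> set_integrable lborel {a..b} g \<and>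
        f b - f a = (\<integral>x\<in>{a..b}. g x \<partial>lborel))"

text \<open>Ys has the Y-zero biased distribution (Y mean zero, variance = E[Y^2]):
  E[Y f(Y)] = sigma^2 E[f'(Ys)] for all absolutely continuous f for which the expectations exist.\<close>
definition zero_biased :: "'a measure \<Rightarrow> ('a \<Rightarrow> real) \<Rightarrow> ('a \<Rightarrow> real) \<Rightarrow> bool" where
  "zero_biased M Y Ys \<longleftrightarrow>
     (\<forall>f g. abs_cont_deriv f g \<longrightarrow>
        integrable M (\<lambda>\<omega>. Y \<omega> * f (Y \<omega>)) \<longrightarrow>
        integrable M (\<lambda>\<omega>. g (Ys \<omega>)) \<longrightarrow>
        (\<integral>\<omega>. Y \<omega> * f (Y \<omega>) \<partial>M) = (\<integral>\<omega>. (Y \<omega>)\<^sup>2 \<partial>M) * (\<integral>\<omega>. g (Ys \<omega>) \<partial>M))"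

end

theory Submission
  imports Defs
begin

text \<open>Let \<open>m u = E[exp (u Y)]\<close>. The zero-bias identity with \<open>f = exp (u \<cdot>)\<close> says
  \<open>m' u = E[Y exp (u Y)] = \<sigma>\<^sup>2 u E[exp (u Y\<^sup>*)]\<close>, and a bound \<open>Y\<^sup>* - Y \<le> c\<close> gives
  \<open>E[exp (u Y\<^sup>*)] \<le> \<rho> u m u\<close> with \<open>\<rho> = 1 / (1 - \<theta> c)\<close>, \<open>(2 + \<theta> c) / (2 - \<theta> c)\<close> or
  \<open>exp (u c)\<close>. Integrating the differential inequality \<open>m' \<le> \<sigma>\<^sup>2 u \<rho> u m\<close> bounds \<open>m \<theta>\<close>,
  and the Chernoff bound at a suitable \<open>\<theta>\<close> gives the tail estimates. Lower tails come from the pair \<open>(-Y, -Y\<^sup>*)\<close>.\<close>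

lemma exp_minus_one_le_half_mult_exp_plus_one:
  fixes d :: real assumes "0 \<le> d"
  shows "exp d - 1 \<le> d * (exp d + 1) / 2"
proof -
  define h where "h x = x * (exp x + 1) / 2 - exp x + 1" for x :: real
  have "h 0 \<le> h d"
  proof (rule DERIV_nonneg_imp_nondecreasing[OF assms])
    fix x :: real
    have "exp x * (1 - x) \<le> exp x * exp (-x)"
      using exp_ge_add_one_self[of "-x"] by (intro mult_left_mono) auto
    then have "(exp x + 1) / 2 + x * exp x / 2 - exp x \<ge> 0"
      by (simp add: exp_minus field_simps)
    moreover have "DERIV h x :> (exp x + 1) / 2 + x * exp x / 2 - exp x"
      unfolding h_def by (auto intro!: derivative_eq_intros simp: field_simps)
    ultimately show "\<exists>y. DERIV h x :> y \<and> y \<ge> 0" by blast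
  qed
  then show ?thesis by (simp add: h_def)
qed

lemma exp_mult_one_minus_le_one:
  fixes d x :: real assumes "d \<le> x"
  shows "exp d * (1 - x) \<le> 1"
proof -
  have "exp d * (1 - x) \<le> exp d * (1 - d)" using assms by (simp add: mult_left_mono)
  also have "\<dots> \<le> exp d * exp (- d)" using exp_ge_add_one_self[of "-d"] by (intro mult_left_mono) auto
  finally show ?thesis by (simp add: exp_minus)
qed

lemma exp_mult_two_minus_le_two_plus:
  fixes d x :: real assumes "d \<le> x" "0 \<le> x"
  shows "exp d * (2 - x) \<le> 2 + x"
proof (cases "0 \<le> d")
  case True
  have "d * (exp d + 1) \<le> x * (exp d + 1)"
    using assms(1) by (intro mult_right_mono) (auto intro: add_nonneg_nonneg)
  then have "exp d - 1 \<le> x * (exp d + 1) / 2"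
    using exp_minus_one_le_half_mult_exp_plus_one[OF True] by linarith
  then show ?thesis by (simp add: algebra_simps)
next
  case False
  then have "exp d \<le> 1" by simp
  show ?thesis
  proof (cases "x \<le> 2")
    case True
    then have "exp d * (2 - x) \<le> 2 - x" using \<open>exp d \<le> 1\<close> by (simp add: mult_left_le_one_le)
    then show ?thesis using assms(2) by linarith
  next
    case False
    then have "exp d * (2 - x) \<le> 0" by (simp add: mult_nonneg_nonpos)
    then show ?thesis using assms(2) by linarith
  qed
qed

lemma inverse_one_minus_le_exp:
  fixes x :: real assumes "0 \<le> x" "x \<le> 1/2"
  shows "1 / (1 - x) \<le> exp (x + 2 * x\<^sup>2)"
proof -
  have "exp (- x - 2 * x\<^sup>2) \<le> 1 - x"
    using ln_one_minus_pos_lower_bound[OF assms] assms by (simp add: ln_ge_iff)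
  then have "1 \<le> (1 - x) * exp (x + 2 * x\<^sup>2)"
    using mult_right_mono[of _ _ "exp (x + 2 * x\<^sup>2)"] by (fastforce simp: exp_add[symmetric])
  then show ?thesis using assms by (simp add: divide_simps mult.commute)
qed

lemma ln_le_half:
  fixes x :: real assumes "0 < x"
  shows "ln x \<le> x / 2"
proof -
  have "ln x = 2 * ln (sqrt x)" using assms by (simp add: ln_sqrt)
  also have "\<dots> \<le> 2 * (sqrt x - 1)" using ln_le_minus_one[of "sqrt x"] assms by simp
  also have "\<dots> \<le> x / 2"
  proof -
    have "0 \<le> (sqrt x - 2)\<^sup>2" by simp
    then show ?thesis using assms by (simp add: power2_eq_square algebra_simps)
  qed
  finally show ?thesis .
qed

text \<open>The left-hand side is \<open>\<sigma>\<^sup>2 R \<theta>\<^sup>2 / 2 - \<theta> t\<close> for \<open>q = \<sigma>\<^sup>2\<close>, \<open>x = c t\<close>, \<open>\<theta> = t / (\<sigma>\<^sup>2 + c t)\<close>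
  and \<open>R = (2 + \<theta> c) / (2 - \<theta> c)\<close>.\<close>
lemma ten_thirds_exponent_le:
  fixes q x t :: real assumes "0 < q" "0 \<le> x"
  shows "q * ((2 * q + 3 * x) / (2 * q + x)) * (t / (q + x))\<^sup>2 / 2 - t / (q + x) * t
    \<le> - (t\<^sup>2 / (10 * q / 3 + x))"
proof -
  have frac: "s * (N / P) * (t / D)\<^sup>2 / 2 - t / D * t = t\<^sup>2 * (s * N - 2 * D * P) / (2 * P * D\<^sup>2)"
    if "D \<noteq> 0" "P \<noteq> 0" for s N P D :: real
    using that by (simp add: field_simps power2_eq_square)
  have "0 < 2 * q + x" "0 < q + x" using assms by simp_all
  then have "q * ((2 * q + 3 * x) / (2 * q + x)) * (t / (q + x))\<^sup>2 / 2 - t / (q + x) * t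
      = - t\<^sup>2 * ((2 * q\<^sup>2 + 3 * q * x + 2 * x\<^sup>2) / (2 * (2 * q + x) * (q + x)\<^sup>2))"
    using frac[of "q + x" "2 * q + x" q "2 * q + 3 * x"] by (simp add: power2_eq_square algebra_simps)
  also have "\<dots> \<le> - t\<^sup>2 * (3 / (10 * q + 3 * x))"
  proof (rule mult_left_mono_neg)
    have "(2 * q\<^sup>2 + 3 * q * x + 2 * x\<^sup>2) * (10 * q + 3 * x) - 6 * (2 * q + x) * (q + x)\<^sup>2
          = q * (8 * q\<^sup>2 + 6 * q * x + 5 * x\<^sup>2)"
      by (simp add: power2_eq_square algebra_simps)
    also have "\<dots> \<ge> 0" using assms by simp
    finally show "3 / (10 * q + 3 * x) \<le> (2 * q\<^sup>2 + 3 * q * x + 2 * x\<^sup>2) / (2 * (2 * q + x) * (q + x)\<^sup>2)"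
      using assms by (simp add: divide_simps mult_ac)
  qed simp
  also have "\<dots> = - (t\<^sup>2 / (10 * q / 3 + x))" by (simp add: field_simps)
  finally show ?thesis .
qed

lemma ln_ln_exponent_le:
  fixes c t s :: real assumes "0 < c" "exp 1 < t"
  shows "exp (- (t / c) * (ln t - ln (ln t) - s / c)) \<le> exp (- (t / (2 * c)) * (ln t - 2 * s / c))"
proof -
  have "1 < t" using assms(2) exp_gt_one[of 1] by linarith
  then have "0 < t" by simp
  then have "ln (ln t) \<le> ln t / 2"
    using ln_le_half[of "ln t"] \<open>1 < t\<close> by simp
  have "- (t / c) * (ln t - ln (ln t) - s / c) = - (t / (2 * c)) * (ln t - 2 * s / c) - (t / c) * (ln t / 2 - ln (ln t))"
    using assms(1) by (simp add: field_simps)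
  also have "\<dots> \<le> - (t / (2 * c)) * (ln t - 2 * s / c)"
    using \<open>ln (ln t) \<le> ln t / 2\<close> \<open>0 < t\<close> assms(1) by simp
  finally show ?thesis by simp
qed

lemma secant_ge_of_deriv_mono:
  fixes G b :: "real \<Rightarrow> real"
  assumes deriv: "\<And>u. a \<le> u \<Longrightarrow> u \<le> c \<Longrightarrow> (G has_real_derivative b u) (at u)"
    and mono: "\<And>u v. a \<le> u \<Longrightarrow> u \<le> v \<Longrightarrow> v \<le> c \<Longrightarrow> b u \<le> b v"
    and "a \<le> x" "x \<le> y" "y \<le> c"
  shows "(y - x) * b x \<le> G y - G x"
proof (cases "x = y")
  case False
  then have "x < y" using assms by simp
  with MVT2[OF this, of G b] deriv assms obtain z where "x < z" "z < y" "G y - G x = (y - x) * b z"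
    by force
  with mono[of x z] assms show ?thesis by (simp add: mult_left_mono)
qed simp

context
  fixes m G b :: "real \<Rightarrow> real" and \<theta> :: real
  assumes deriv: "\<And>u. 0 \<le> u \<Longrightarrow> u \<le> \<theta> \<Longrightarrow> (G has_real_derivative b u) (at u)"
    and mono: "\<And>u v. 0 \<le> u \<Longrightarrow> u \<le> v \<Longrightarrow> v \<le> \<theta> \<Longrightarrow> b u \<le> b v"
    and "0 \<le> b 0" and "m 0 = 1"
    and step: "\<And>u v. 0 \<le> u \<Longrightarrow> u \<le> v \<Longrightarrow> v \<le> \<theta> \<Longrightarrow> m v * (1 - (v - u) * b v) \<le> m u"
begin

lemma gronwall_grid_bound:
  fixes \<Delta> :: real and j :: nat
  assumes "0 \<le> \<Delta>" and small: "\<Delta> * b \<theta> \<le> 1/2"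
  shows "j * \<Delta> \<le> \<theta> \<Longrightarrow> m (j * \<Delta>) \<le> exp (G (j * \<Delta>) - G 0 + \<Delta> * b (j * \<Delta>) + 2 * j * (\<Delta> * b \<theta>)\<^sup>2)"
proof (induction j)
  case 0
  then show ?case using \<open>m 0 = 1\<close> \<open>0 \<le> \<Delta>\<close> \<open>0 \<le> b 0\<close> by simp
next
  case (Suc j)
  define u where "u = j * \<Delta>"
  define x where "x = \<Delta> * b (u + \<Delta>)"
  have "0 \<le> u" "u + \<Delta> \<le> \<theta>" using \<open>0 \<le> \<Delta>\<close> Suc.prems by (simp_all add: u_def algebra_simps)
  have "0 \<le> b (u + \<Delta>)" "b (u + \<Delta>) \<le> b \<theta>"
    using mono[of 0 "u + \<Delta>"] mono[of "u + \<Delta>" \<theta>] \<open>0 \<le> b 0\<close> \<open>0 \<le> u\<close> \<open>0 \<le> \<Delta>\<close> \<open>u + \<Delta> \<le> \<theta>\<close>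
    by auto
  then have "0 \<le> x" "x \<le> \<Delta> * b \<theta>"
    using \<open>0 \<le> \<Delta>\<close> by (auto simp: x_def mult_left_mono)
  then have "x \<le> 1/2" "x\<^sup>2 \<le> (\<Delta> * b \<theta>)\<^sup>2" using small by (simp_all add: power_mono)
  have secant: "\<Delta> * b u \<le> G (u + \<Delta>) - G u"
    using secant_ge_of_deriv_mono[of 0 \<theta> G b u "u + \<Delta>"] deriv mono \<open>0 \<le> u\<close> \<open>0 \<le> \<Delta>\<close> \<open>u + \<Delta> \<le> \<theta>\<close>
    by simp
  have IH: "m u \<le> exp (G u - G 0 + \<Delta> * b u + 2 * j * (\<Delta> * b \<theta>)\<^sup>2)"
    using Suc.IH \<open>u + \<Delta> \<le> \<theta>\<close> \<open>0 \<le> \<Delta>\<close> by (simp add: u_def)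
  have "m (u + \<Delta>) \<le> m u / (1 - x)"
    using step[of u "u + \<Delta>"] \<open>0 \<le> u\<close> \<open>0 \<le> \<Delta>\<close> \<open>u + \<Delta> \<le> \<theta>\<close> \<open>x \<le> 1/2\<close>
    by (simp add: x_def pos_le_divide_eq)
  also have "\<dots> \<le> exp (G u - G 0 + \<Delta> * b u + 2 * j * (\<Delta> * b \<theta>)\<^sup>2) * (1 / (1 - x))"
    using IH \<open>x \<le> 1/2\<close> by (simp add: divide_right_mono)
  also have "\<dots> \<le> exp (G u - G 0 + \<Delta> * b u + 2 * j * (\<Delta> * b \<theta>)\<^sup>2) * exp (x + 2 * x\<^sup>2)"
    using inverse_one_minus_le_exp[OF \<open>0 \<le> x\<close> \<open>x \<le> 1/2\<close>] by (rule mult_left_mono) simp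
  also have "\<dots> \<le> exp (G (u + \<Delta>) - G 0 + \<Delta> * b (u + \<Delta>) + 2 * Suc j * (\<Delta> * b \<theta>)\<^sup>2)"
    using secant \<open>x\<^sup>2 \<le> (\<Delta> * b \<theta>)\<^sup>2\<close> by (simp add: x_def exp_add[symmetric] algebra_simps)
  finally show ?case by (simp add: u_def algebra_simps)
qed

lemma gronwall_from_increments:
  assumes "0 \<le> \<theta>"
  shows "m \<theta> \<le> exp (G \<theta> - G 0)"
proof -
  define D where "D = b \<theta> + 2 * \<theta> * (b \<theta>)\<^sup>2"
  have grid: "m \<theta> \<le> exp (G \<theta> - G 0 + \<theta> / n * D)" if "0 < n" "\<theta> / n * b \<theta> \<le> 1/2" for n :: nat
  proof -
    have "n * (\<theta> / n) = \<theta>" using \<open>0 < n\<close> by simp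
    then have "m \<theta> \<le> exp (G \<theta> - G 0 + \<theta> / n * b \<theta> + 2 * n * (\<theta> / n * b \<theta>)\<^sup>2)"
      using gronwall_grid_bound[of "\<theta> / n" n] that assms by simp
    also have "2 * n * (\<theta> / n * b \<theta>)\<^sup>2 = \<theta> / n * (2 * \<theta> * (b \<theta>)\<^sup>2)"
      using \<open>0 < n\<close> by (simp add: power2_eq_square)
    finally show ?thesis by (simp add: D_def algebra_simps)
  qed
  have lim: "(\<lambda>n. exp (G \<theta> - G 0 + \<theta> / real n * D)) \<longlonglongrightarrow> exp (G \<theta> - G 0 + 0 * D)"
    by (intro tendsto_intros)
  have "eventually (\<lambda>n. \<theta> / real n * b \<theta> \<le> 1/2) sequentially"
    using order_tendstoD(2)[OF tendsto_mult_left_zero[OF lim_const_over_n[of \<theta>]], of "1/2" "b \<theta>"]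
    by (auto elim: eventually_mono)
  then have "eventually (\<lambda>n. m \<theta> \<le> exp (G \<theta> - G 0 + \<theta> / real n * D)) sequentially"
    using eventually_gt_at_top[of 0] by eventually_elim (blast intro: grid)
  from tendsto_le[OF trivial_limit_sequentially lim tendsto_const this] show ?thesis by simp
qed

end

lemma abs_cont_deriv_exp: "abs_cont_deriv (\<lambda>y. exp (r * y)) (\<lambda>y. r * exp (r * y))"
  unfolding abs_cont_deriv_def
proof (intro allI impI conjI)
  fix a b :: real assume "a \<le> b"
  show "set_integrable lborel {a..b} (\<lambda>y. r * exp (r * y))"
    unfolding set_integrable_def
    by (rule borel_integrable_compact) (auto intro!: continuous_intros)
  have "(\<integral>y. r * exp (r * y) * indicator {a..b} y \<partial>lborel) = exp (r * b) - exp (r * a)"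
    by (rule integral_FTC_Icc_real[OF \<open>a \<le> b\<close>]) (auto intro!: derivative_eq_intros continuous_intros)
  then show "exp (r * b) - exp (r * a) = (\<integral>y\<in>{a..b}. r * exp (r * y) \<partial>lborel)"
    unfolding set_lebesgue_integral_def by (simp add: mult.commute)
qed

lemma zero_biased_exp_identity:
  assumes "zero_biased M Y Ys"
    and "integrable M (\<lambda>\<omega>. Y \<omega> * exp (r * Y \<omega>))" and "integrable M (\<lambda>\<omega>. exp (r * Ys \<omega>))"
  shows "(\<integral>\<omega>. Y \<omega> * exp (r * Y \<omega>) \<partial>M) = (\<integral>\<omega>. (Y \<omega>)\<^sup>2 \<partial>M) * r * (\<integral>\<omega>. exp (r * Ys \<omega>) \<partial>M)"
proof -
  have "integrable M (\<lambda>\<omega>. r * exp (r * Ys \<omega>))" using assms(3) by simp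
  with assms(1,2) abs_cont_deriv_exp[of r]
  have "(\<integral>\<omega>. Y \<omega> * exp (r * Y \<omega>) \<partial>M) = (\<integral>\<omega>. (Y \<omega>)\<^sup>2 \<partial>M) * (\<integral>\<omega>. r * exp (r * Ys \<omega>) \<partial>M)"
    unfolding zero_biased_def by blast
  then show ?thesis by simp
qed

context prob_space
begin

lemma integrable_exp_mult_mono:
  fixes X :: "'a \<Rightarrow> real"
  assumes "integrable M (\<lambda>\<omega>. exp (\<theta> * X \<omega>))" "X \<in> borel_measurable M" "0 \<le> u" "u \<le> \<theta>"
  shows "integrable M (\<lambda>\<omega>. exp (u * X \<omega>))"
proof (rule Bochner_Integration.integrable_bound)
  show "integrable M (\<lambda>\<omega>. 1 + exp (\<theta> * X \<omega>))" using assms(1) by simp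
  have "exp (u * X \<omega>) \<le> 1 + exp (\<theta> * X \<omega>)" for \<omega>
  proof (cases "0 \<le> X \<omega>")
    case True
    then have "exp (u * X \<omega>) \<le> exp (\<theta> * X \<omega>)" using assms(4) by (simp add: mult_right_mono)
    then show ?thesis using exp_gt_zero[of "\<theta> * X \<omega>"] by linarith
  next
    case False
    then have "exp (u * X \<omega>) \<le> 1" using assms(3) by (simp add: mult_nonneg_nonpos)
    then show ?thesis using exp_gt_zero[of "\<theta> * X \<omega>"] by linarith
  qed
  then show "AE \<omega> in M. norm (exp (u * X \<omega>)) \<le> norm (1 + exp (\<theta> * X \<omega>))"
    by (intro AE_I2) (simp add: add_pos_pos)
qed (use assms(2) in measurable)

lemma integrable_mult_exp_mult:
  fixes X :: "'a \<Rightarrow> real"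
  assumes "integrable M (\<lambda>\<omega>. exp (\<theta> * X \<omega>))" "integrable M X" "0 \<le> u" "u < \<theta>"
  shows "integrable M (\<lambda>\<omega>. X \<omega> * exp (u * X \<omega>))"
proof (rule Bochner_Integration.integrable_bound)
  show "integrable M (\<lambda>\<omega>. \<bar>X \<omega>\<bar> + exp (\<theta> * X \<omega>) / (\<theta> - u))" using assms(1,2) by simp
  have "\<bar>x * exp (u * x)\<bar> \<le> \<bar>x\<bar> + exp (\<theta> * x) / (\<theta> - u)" for x :: real
  proof (cases "0 \<le> x")
    case True
    have "(\<theta> - u) * x \<le> exp ((\<theta> - u) * x)"
      using exp_ge_add_one_self[of "(\<theta> - u) * x"] by linarith
    then have "(\<theta> - u) * x * exp (u * x) \<le> exp ((\<theta> - u) * x) * exp (u * x)"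
      by (rule mult_right_mono) simp
    also have "\<dots> = exp (\<theta> * x)" by (simp add: exp_add[symmetric] algebra_simps)
    finally have "x * exp (u * x) \<le> exp (\<theta> * x) / (\<theta> - u)"
      using assms(4) by (simp add: pos_le_divide_eq mult_ac)
    then show ?thesis using True by (simp add: abs_mult)
  next
    case False
    then have "exp (u * x) \<le> 1" using assms(3) by (simp add: mult_nonneg_nonpos)
    then have "\<bar>x * exp (u * x)\<bar> \<le> \<bar>x\<bar>" by (simp add: abs_mult mult_left_le)
    moreover have "0 \<le> exp (\<theta> * x) / (\<theta> - u)" using assms(4) by simp
    ultimately show ?thesis by linarith
  qed
  then show "AE \<omega> in M. norm (X \<omega> * exp (u * X \<omega>)) \<le> norm (\<bar>X \<omega>\<bar> + exp (\<theta> * X \<omega>) / (\<theta> - u))"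
    using assms(4) by (intro AE_I2) simp
qed (use assms(2) in measurable)

end

text \<open>Only the instance \<open>f = exp (u \<cdot>)\<close>, \<open>u \<ge> 0\<close>, of the zero-bias identity is used; unlike
  \<open>zero_biased\<close> itself, this instance passes directly to the pair \<open>(-Y, -Y\<^sup>*)\<close>.\<close>
locale exp_zero_bias = prob_space +
  fixes Z Zs :: "'a \<Rightarrow> real" and \<sigma>2 :: real
  assumes integrable_Z: "integrable M Z"
    and measurable_Zs: "Zs \<in> borel_measurable M"
    and variance_nonneg: "0 \<le> \<sigma>2"
    and exp_identity: "\<And>u. 0 \<le> u \<Longrightarrow> integrable M (\<lambda>\<omega>. Z \<omega> * exp (u * Z \<omega>)) \<Longrightarrow>
      integrable M (\<lambda>\<omega>. exp (u * Zs \<omega>)) \<Longrightarrow>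
      (\<integral>\<omega>. Z \<omega> * exp (u * Z \<omega>) \<partial>M) = \<sigma>2 * u * (\<integral>\<omega>. exp (u * Zs \<omega>) \<partial>M)"
begin

lemma measurable_Z: "Z \<in> borel_measurable M"
  using integrable_Z by simp

text \<open>Convexity of \<open>exp\<close> bounds the increment of the moment generating function by
  \<open>E[Z exp (v Z)]\<close>, which the zero-bias identity turns into the mgf of \<open>Zs\<close>.\<close>
lemma mgf_increment:
  assumes "integrable M (\<lambda>\<omega>. exp (\<theta> * Z \<omega>))" "0 \<le> u" "u \<le> v" "v < \<theta>"
    and ratio: "AE \<omega> in M. exp (v * Zs \<omega>) \<le> r * exp (v * Z \<omega>)"
  shows "(\<integral>\<omega>. exp (v * Z \<omega>) \<partial>M) * (1 - (v - u) * (\<sigma>2 * v * r)) \<le> (\<integral>\<omega>. exp (u * Z \<omega>) \<partial>M)"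
proof -
  have int_u: "integrable M (\<lambda>\<omega>. exp (u * Z \<omega>))" and int_v: "integrable M (\<lambda>\<omega>. exp (v * Z \<omega>))"
    using integrable_exp_mult_mono[OF assms(1) measurable_Z] assms(2-4) by simp_all
  have int_Zv: "integrable M (\<lambda>\<omega>. Z \<omega> * exp (v * Z \<omega>))"
    using integrable_mult_exp_mult[OF assms(1) integrable_Z] assms(2-4) by simp
  have int_Zs: "integrable M (\<lambda>\<omega>. exp (v * Zs \<omega>))"
  proof (rule Bochner_Integration.integrable_bound)
    show "integrable M (\<lambda>\<omega>. r * exp (v * Z \<omega>))" using int_v by simp
    show "AE \<omega> in M. norm (exp (v * Zs \<omega>)) \<le> norm (r * exp (v * Z \<omega>))"
      using ratio by eventually_elim simp
  qed (use measurable_Zs in measurable)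
  have convex: "exp (v * z) - exp (u * z) \<le> (v - u) * (z * exp (v * z))" for z :: real
  proof -
    have "(1 + (u - v) * z) * exp (v * z) \<le> exp ((u - v) * z) * exp (v * z)"
      by (intro mult_right_mono exp_ge_add_one_self) simp
    then show ?thesis by (simp add: exp_add[symmetric] algebra_simps)
  qed
  have "(\<integral>\<omega>. exp (v * Z \<omega>) \<partial>M) - (\<integral>\<omega>. exp (u * Z \<omega>) \<partial>M) = (\<integral>\<omega>. exp (v * Z \<omega>) - exp (u * Z \<omega>) \<partial>M)"
    using int_u int_v by simp
  also have "\<dots> \<le> (\<integral>\<omega>. (v - u) * (Z \<omega> * exp (v * Z \<omega>)) \<partial>M)"
    using int_u int_v int_Zv convex by (intro integral_mono) auto
  also have "\<dots> = (v - u) * (\<sigma>2 * v * (\<integral>\<omega>. exp (v * Zs \<omega>) \<partial>M))"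
    using exp_identity[OF _ int_Zv int_Zs] assms(2,3) by simp
  also have "\<dots> \<le> (v - u) * (\<sigma>2 * v * (r * (\<integral>\<omega>. exp (v * Z \<omega>) \<partial>M)))"
  proof -
    have "(\<integral>\<omega>. exp (v * Zs \<omega>) \<partial>M) \<le> (\<integral>\<omega>. r * exp (v * Z \<omega>) \<partial>M)"
      using int_Zs int_v ratio by (intro integral_mono_AE) auto
    then show ?thesis using assms(2,3) variance_nonneg by (intro mult_left_mono) auto
  qed
  finally show ?thesis by (simp add: algebra_simps)
qed

lemma mgf_le_exp:
  fixes \<rho> G :: "real \<Rightarrow> real"
  assumes "integrable M (\<lambda>\<omega>. exp (\<theta>' * Z \<omega>))" "0 \<le> \<theta>" "\<theta> < \<theta>'"
    and ratio: "\<And>u. 0 \<le> u \<Longrightarrow> u \<le> \<theta> \<Longrightarrow> AE \<omega> in M. exp (u * Zs \<omega>) \<le> \<rho> u * exp (u * Z \<omega>)"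
    and "0 \<le> \<rho> 0" and mono: "\<And>u v. 0 \<le> u \<Longrightarrow> u \<le> v \<Longrightarrow> v \<le> \<theta> \<Longrightarrow> \<rho> u \<le> \<rho> v"
    and deriv: "\<And>u. 0 \<le> u \<Longrightarrow> u \<le> \<theta> \<Longrightarrow> (G has_real_derivative \<sigma>2 * u * \<rho> u) (at u)"
  shows "(\<integral>\<omega>. exp (\<theta> * Z \<omega>) \<partial>M) \<le> exp (G \<theta> - G 0)"
proof (rule gronwall_from_increments[OF deriv])
  fix u v assume uv: "0 \<le> u" "u \<le> v" "v \<le> \<theta>"
  show "\<sigma>2 * u * \<rho> u \<le> \<sigma>2 * v * \<rho> v"
    using mono[OF uv] mono[of 0 u] \<open>0 \<le> \<rho> 0\<close> variance_nonneg uv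
    by (intro mult_mono mult_left_mono) auto
  show "(\<integral>\<omega>. exp (v * Z \<omega>) \<partial>M) * (1 - (v - u) * (\<sigma>2 * v * \<rho> v)) \<le> (\<integral>\<omega>. exp (u * Z \<omega>) \<partial>M)"
    using mgf_increment[OF assms(1) uv(1,2)] ratio[of v] uv assms(3) by simp
qed (use \<open>0 \<le> \<theta>\<close> in \<open>simp_all add: prob_space\<close>)

lemma tail_le_exp:
  fixes \<rho> G :: "real \<Rightarrow> real"
  assumes "integrable M (\<lambda>\<omega>. exp (\<theta>' * Z \<omega>))" "0 < \<theta>" "\<theta> < \<theta>'"
    and ratio: "\<And>u. 0 \<le> u \<Longrightarrow> u \<le> \<theta> \<Longrightarrow> AE \<omega> in M. exp (u * Zs \<omega>) \<le> \<rho> u * exp (u * Z \<omega>)"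
    and "0 \<le> \<rho> 0" and mono: "\<And>u v. 0 \<le> u \<Longrightarrow> u \<le> v \<Longrightarrow> v \<le> \<theta> \<Longrightarrow> \<rho> u \<le> \<rho> v"
    and deriv: "\<And>u. 0 \<le> u \<Longrightarrow> u \<le> \<theta> \<Longrightarrow> (G has_real_derivative \<sigma>2 * u * \<rho> u) (at u)"
  shows "measure M {\<omega>\<in>space M. Z \<omega> \<ge> t} \<le> exp (G \<theta> - G 0 - \<theta> * t)"
proof -
  have int: "integrable M (\<lambda>\<omega>. exp (\<theta> * Z \<omega>))"
    using integrable_exp_mult_mono[OF assms(1) measurable_Z] assms(2,3) by simp
  have set_int: "set_integrable M (space M) (\<lambda>\<omega>. exp (\<theta> * Z \<omega>))"
    unfolding set_integrable_def by (rule Bochner_Integration.integrable_cong[THEN iffD2, OF refl _ int]) simp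
  have "measure M {\<omega>\<in>space M. Z \<omega> \<ge> t} \<le> exp (- \<theta> * t) * (\<integral>\<omega>. exp (\<theta> * Z \<omega>) \<partial>M)"
    using Chernoff_ineq_ge[OF \<open>0 < \<theta>\<close> set_int] by (simp add: set_integral_space[OF int])
  also have "\<dots> \<le> exp (- \<theta> * t) * exp (G \<theta> - G 0)"
    using mgf_le_exp[OF assms(1) _ assms(3-7)] assms(2) by simp
  finally show ?thesis by (simp add: exp_add[symmetric])
qed

lemma tail_le_exp_quadratic:
  assumes "integrable M (\<lambda>\<omega>. exp (\<theta>' * Z \<omega>))" "0 < \<theta>" "\<theta> < \<theta>'" "0 \<le> R"
    and ratio: "\<And>u. 0 \<le> u \<Longrightarrow> u \<le> \<theta> \<Longrightarrow> AE \<omega> in M. exp (u * Zs \<omega>) \<le> R * exp (u * Z \<omega>)"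
  shows "measure M {\<omega>\<in>space M. Z \<omega> \<ge> t} \<le> exp (\<sigma>2 * R * \<theta>\<^sup>2 / 2 - \<theta> * t)"
proof -
  have "((\<lambda>u. \<sigma>2 * R * u\<^sup>2 / 2) has_real_derivative \<sigma>2 * u * R) (at u)" for u
    by (auto intro!: derivative_eq_intros simp: field_simps power2_eq_square)
  from tail_le_exp[where \<rho> = "\<lambda>_. R", OF assms(1-3) ratio _ _ this] show ?thesis
    using \<open>0 \<le> R\<close> by simp
qed

lemma AE_exp_Zs_le:
  assumes "AE \<omega> in M. Zs \<omega> - Z \<omega> \<le> c" "0 \<le> u" and bound: "\<And>d. d \<le> u * c \<Longrightarrow> exp d \<le> r"
  shows "AE \<omega> in M. exp (u * Zs \<omega>) \<le> r * exp (u * Z \<omega>)"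
  using assms(1)
proof eventually_elim
  case (elim \<omega>)
  then have "u * (Zs \<omega> - Z \<omega>) \<le> u * c" using assms(2) by (rule mult_left_mono)
  then have "exp (u * (Zs \<omega> - Z \<omega>)) * exp (u * Z \<omega>) \<le> r * exp (u * Z \<omega>)"
    using bound by (intro mult_right_mono) auto
  then show ?case by (simp add: exp_add[symmetric] algebra_simps)
qed

lemma tail_le_bernstein:
  assumes "0 < \<sigma>2" "0 < c" and diff: "AE \<omega> in M. Zs \<omega> - Z \<omega> \<le> c"
    and mgf: "\<forall>s\<in>{0..<1/c}. integrable M (\<lambda>\<omega>. exp (s * Z \<omega>))" and "0 \<le> t"
  shows "measure M {\<omega>\<in>space M. Z \<omega> \<ge> t} \<le> exp (- (t\<^sup>2 / (2 * (\<sigma>2 + c * t))))"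
proof (cases "t = 0")
  case False
  define \<theta> where "\<theta> = t / (\<sigma>2 + c * t)"
  define K where "K = \<sigma>2 / (\<sigma>2 + c * t)"
  have "0 < \<sigma>2 + c * t" using assms by (simp add: add_pos_nonneg)
  then have "0 < \<theta>" "0 < K" "K = 1 - \<theta> * c"
    using assms False by (auto simp: \<theta>_def K_def field_simps)
  define \<theta>' where "\<theta>' = (\<theta> + 1/c) / 2"
  have "\<theta> < \<theta>'" "\<theta>' \<in> {0..<1/c}"
    using \<open>0 < \<theta>\<close> \<open>K = 1 - \<theta> * c\<close> \<open>0 < K\<close> \<open>0 < c\<close> by (auto simp: \<theta>'_def field_simps)
  have "measure M {\<omega>\<in>space M. Z \<omega> \<ge> t} \<le> exp (\<sigma>2 * (1 / K) * \<theta>\<^sup>2 / 2 - \<theta> * t)"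
  proof (rule tail_le_exp_quadratic)
    show "integrable M (\<lambda>\<omega>. exp (\<theta>' * Z \<omega>))" using mgf \<open>\<theta>' \<in> {0..<1/c}\<close> by blast
    fix u assume "0 \<le> u" "u \<le> \<theta>"
    then have "u * c \<le> \<theta> * c" using \<open>0 < c\<close> by (simp add: mult_right_mono)
    have "exp d \<le> 1 / K" if "d \<le> u * c" for d
      using exp_mult_one_minus_le_one[of d "\<theta> * c"] that \<open>u * c \<le> \<theta> * c\<close> \<open>0 < K\<close> \<open>K = 1 - \<theta> * c\<close>
      by (simp add: le_divide_eq mult.commute)
    then show "AE \<omega> in M. exp (u * Zs \<omega>) \<le> 1 / K * exp (u * Z \<omega>)"
      using AE_exp_Zs_le[OF diff \<open>0 \<le> u\<close>] by blast
  qed (use \<open>0 < \<theta>\<close> \<open>\<theta> < \<theta>'\<close> \<open>0 < K\<close> in auto)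
  also have "\<sigma>2 * (1 / K) * \<theta>\<^sup>2 / 2 - \<theta> * t = - (t\<^sup>2 / (2 * (\<sigma>2 + c * t)))"
  proof -
    have "\<sigma>2 * (1 / K) * \<theta>\<^sup>2 / 2 = t\<^sup>2 / (2 * (\<sigma>2 + c * t))"
      using \<open>0 < \<sigma>2 + c * t\<close> \<open>0 < \<sigma>2\<close> by (simp add: \<theta>_def K_def power2_eq_square)
    moreover have "\<theta> * t = t\<^sup>2 / (\<sigma>2 + c * t)" by (simp add: \<theta>_def power2_eq_square)
    ultimately show ?thesis using \<open>0 < \<sigma>2 + c * t\<close> by (simp add: field_simps)
  qed
  finally show ?thesis .
qed simp

lemma tail_le_ten_thirds:
  assumes "0 < \<sigma>2" "0 < c" and diff: "AE \<omega> in M. Zs \<omega> - Z \<omega> \<le> c"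
    and mgf: "\<forall>s\<in>{0..<1/c}. integrable M (\<lambda>\<omega>. exp (s * Z \<omega>))" and "0 \<le> t"
  shows "measure M {\<omega>\<in>space M. Z \<omega> \<ge> t} \<le> exp (- (t\<^sup>2 / (10 * \<sigma>2 / 3 + c * t)))"
proof (cases "t = 0")
  case False
  define x where "x = c * t"
  define \<theta> where "\<theta> = t / (\<sigma>2 + x)"
  define R where "R = (2 * \<sigma>2 + 3 * x) / (2 * \<sigma>2 + x)"
  have "0 \<le> x" "0 < \<sigma>2 + x" using assms by (simp_all add: x_def add_pos_nonneg)
  then have "0 < \<theta>" "\<theta> * c < 1"
    using assms False by (auto simp: \<theta>_def x_def field_simps)
  have "0 < R" using \<open>0 \<le> x\<close> \<open>0 < \<sigma>2\<close> by (simp add: R_def)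
  have "\<theta> * c = x / (\<sigma>2 + x)" by (simp add: \<theta>_def x_def)
  then have "2 + \<theta> * c = (2 * \<sigma>2 + 3 * x) / (\<sigma>2 + x)" "2 - \<theta> * c = (2 * \<sigma>2 + x) / (\<sigma>2 + x)"
    using \<open>0 < \<sigma>2 + x\<close> by (simp_all add: field_simps)
  then have "R = (2 + \<theta> * c) / (2 - \<theta> * c)"
    using \<open>0 < \<sigma>2 + x\<close> by (simp add: R_def)
  define \<theta>' where "\<theta>' = (\<theta> + 1/c) / 2"
  have "\<theta> < \<theta>'" "\<theta>' \<in> {0..<1/c}"
    using \<open>0 < \<theta>\<close> \<open>\<theta> * c < 1\<close> \<open>0 < c\<close> by (auto simp: \<theta>'_def field_simps)
  have "measure M {\<omega>\<in>space M. Z \<omega> \<ge> t} \<le> exp (\<sigma>2 * R * \<theta>\<^sup>2 / 2 - \<theta> * t)"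
  proof (rule tail_le_exp_quadratic)
    show "integrable M (\<lambda>\<omega>. exp (\<theta>' * Z \<omega>))" using mgf \<open>\<theta>' \<in> {0..<1/c}\<close> by blast
    fix u assume "0 \<le> u" "u \<le> \<theta>"
    then have "u * c \<le> \<theta> * c" using \<open>0 < c\<close> by (simp add: mult_right_mono)
    have "exp d \<le> R" if "d \<le> u * c" for d
      using exp_mult_two_minus_le_two_plus[of d "\<theta> * c"] that \<open>u * c \<le> \<theta> * c\<close> \<open>0 < \<theta>\<close>
        \<open>\<theta> * c < 1\<close> \<open>0 < c\<close> \<open>R = (2 + \<theta> * c) / (2 - \<theta> * c)\<close>
      by (simp add: le_divide_eq)
    then show "AE \<omega> in M. exp (u * Zs \<omega>) \<le> R * exp (u * Z \<omega>)"
      using AE_exp_Zs_le[OF diff \<open>0 \<le> u\<close>] by blast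
  qed (use \<open>0 < \<theta>\<close> \<open>\<theta> < \<theta>'\<close> \<open>0 < R\<close> in auto)
  also have "\<dots> \<le> exp (- (t\<^sup>2 / (10 * \<sigma>2 / 3 + c * t)))"
    using ten_thirds_exponent_le[OF \<open>0 < \<sigma>2\<close> \<open>0 \<le> x\<close>, of t] by (simp add: \<theta>_def R_def x_def mult_ac)
  finally show ?thesis .
qed simp

text \<open>Here the mgf is only assumed finite at \<open>\<theta>\<close> itself, so the bound is first obtained
  for \<open>v < \<theta>\<close> and then extended to \<open>\<theta>\<close> by continuity of the right-hand side.\<close>
lemma tail_le_bennett:
  assumes "0 < c" and diff: "AE \<omega> in M. Zs \<omega> - Z \<omega> \<le> c"
    and "0 < \<theta>" and mgf: "integrable M (\<lambda>\<omega>. exp (\<theta> * Z \<omega>))"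
  shows "measure M {\<omega>\<in>space M. Z \<omega> \<ge> t} \<le> exp (\<sigma>2 * (exp (\<theta> * c) * (\<theta> * c - 1) + 1) / c\<^sup>2 - \<theta> * t)"
proof -
  define G where "G u = \<sigma>2 * (exp (u * c) * (u * c - 1) + 1) / c\<^sup>2" for u
  define F where "F v = exp (G v - v * t)" for v
  have below: "measure M {\<omega>\<in>space M. Z \<omega> \<ge> t} \<le> F v" if "0 < v" "v < \<theta>" for v
  proof -
    have "measure M {\<omega>\<in>space M. Z \<omega> \<ge> t} \<le> exp (G v - G 0 - v * t)"
    proof (rule tail_le_exp[OF mgf that, where \<rho> = "\<lambda>u. exp (u * c)"])
      show "AE \<omega> in M. exp (u * Zs \<omega>) \<le> exp (u * c) * exp (u * Z \<omega>)" if "0 \<le> u" for u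
        using AE_exp_Zs_le[OF diff that] by simp
      show "(G has_real_derivative \<sigma>2 * u * exp (u * c)) (at u)" for u
        unfolding G_def using \<open>0 < c\<close>
        by (auto intro!: derivative_eq_intros simp: field_simps power2_eq_square)
    qed (use \<open>0 < c\<close> in \<open>auto simp: mult_right_mono\<close>)
    then show ?thesis by (simp add: F_def G_def)
  qed
  have "eventually (\<lambda>v. measure M {\<omega>\<in>space M. Z \<omega> \<ge> t} \<le> F v) (at_left \<theta>)"
    using eventually_at_left_real[OF \<open>0 < \<theta>\<close>] by eventually_elim (use below in auto)
  moreover have "(F \<longlongrightarrow> F \<theta>) (at_left \<theta>)"
    unfolding F_def G_def using \<open>0 < c\<close> by (intro tendsto_intros) auto
  ultimately have "measure M {\<omega>\<in>space M. Z \<omega> \<ge> t} \<le> F \<theta>"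
    by (intro tendsto_le[OF trivial_limit_at_left_real _ tendsto_const]) auto
  then show ?thesis by (simp add: F_def G_def)
qed

lemma tail_le_ln_ln:
  assumes "0 < c" and diff: "AE \<omega> in M. Zs \<omega> - Z \<omega> \<le> c" and "exp 1 < t"
    and mgf: "integrable M (\<lambda>\<omega>. exp ((ln t - ln (ln t)) / c * Z \<omega>))"
  shows "measure M {\<omega>\<in>space M. Z \<omega> \<ge> t} \<le> exp (- (t / c) * (ln t - ln (ln t) - \<sigma>2 / c))"
proof -
  define L where "L = ln t"
  define \<theta> where "\<theta> = (L - ln L) / c"
  have "1 < t" using \<open>exp 1 < t\<close> exp_gt_one[of 1] by linarith
  then have "0 < t" by simp
  then have "1 < L" using \<open>exp 1 < t\<close> ln_less_cancel_iff[of "exp 1" t] by (simp add: L_def)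
  then have "0 < ln L" "ln L < L" by (simp_all add: ln_less_self)
  have "L \<le> t" using ln_le_minus_one[OF \<open>0 < t\<close>] by (simp add: L_def)
  have "0 < \<theta>" using \<open>ln L < L\<close> \<open>0 < c\<close> by (simp add: \<theta>_def)
  have "\<theta> * c = L - ln L" using \<open>0 < c\<close> by (simp add: \<theta>_def)
  moreover have "exp (L - ln L) = t / L"
    using \<open>1 < t\<close> \<open>1 < L\<close> by (simp add: exp_diff L_def)
  ultimately have "exp (\<theta> * c) * (\<theta> * c - 1) + 1 = t / L * (L - ln L - 1) + 1" by simp
  also have "\<dots> = t - t * (ln L + 1) / L + 1" using \<open>1 < L\<close> by (simp add: field_simps)
  also have "\<dots> \<le> t"
  proof -
    have "0 \<le> t * ln L" using \<open>0 < ln L\<close> \<open>0 < t\<close> by simp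
    then have "L \<le> t * (ln L + 1)" using \<open>L \<le> t\<close> by (simp add: distrib_left)
    then show ?thesis using \<open>1 < L\<close> by (simp add: le_divide_eq)
  qed
  finally have "\<sigma>2 * (exp (\<theta> * c) * (\<theta> * c - 1) + 1) / c\<^sup>2 - \<theta> * t \<le> \<sigma>2 * t / c\<^sup>2 - \<theta> * t"
    using variance_nonneg by (simp add: divide_right_mono mult_left_mono)
  also have "\<dots> = - (t / c) * (ln t - ln (ln t) - \<sigma>2 / c)"
    using \<open>0 < c\<close> by (simp add: \<theta>_def L_def field_simps power2_eq_square)
  finally show ?thesis
    using tail_le_bennett[OF \<open>0 < c\<close> diff \<open>0 < \<theta>\<close>] mgf order_trans
    by (fastforce simp: \<theta>_def L_def)
qed

end

lemma exp_zero_bias_of_zero_biased: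
  assumes "prob_space M" "zero_biased M Y Ys" "integrable M Y" "Ys \<in> borel_measurable M"
  shows "exp_zero_bias M Y Ys (\<integral>\<omega>. (Y \<omega>)\<^sup>2 \<partial>M)"
proof (intro exp_zero_bias.intro exp_zero_bias_axioms.intro)
  fix u :: real
  assume "integrable M (\<lambda>\<omega>. Y \<omega> * exp (u * Y \<omega>))" "integrable M (\<lambda>\<omega>. exp (u * Ys \<omega>))"
  then show "(\<integral>\<omega>. Y \<omega> * exp (u * Y \<omega>) \<partial>M) = (\<integral>\<omega>. (Y \<omega>)\<^sup>2 \<partial>M) * u * (\<integral>\<omega>. exp (u * Ys \<omega>) \<partial>M)"
    by (rule zero_biased_exp_identity[OF assms(2)])
qed (use assms in auto)

lemma exp_zero_bias_of_zero_biased_uminus: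
  assumes "prob_space M" "zero_biased M Y Ys" "integrable M Y" "Ys \<in> borel_measurable M"
  shows "exp_zero_bias M (\<lambda>\<omega>. - Y \<omega>) (\<lambda>\<omega>. - Ys \<omega>) (\<integral>\<omega>. (Y \<omega>)\<^sup>2 \<partial>M)"
proof (intro exp_zero_bias.intro exp_zero_bias_axioms.intro)
  fix u :: real
  assume "integrable M (\<lambda>\<omega>. - Y \<omega> * exp (u * - Y \<omega>))" "integrable M (\<lambda>\<omega>. exp (u * - Ys \<omega>))"
  then have "integrable M (\<lambda>\<omega>. Y \<omega> * exp (- u * Y \<omega>))" "integrable M (\<lambda>\<omega>. exp (- u * Ys \<omega>))"
    by simp_all
  from zero_biased_exp_identity[OF assms(2) this]
  show "(\<integral>\<omega>. - Y \<omega> * exp (u * - Y \<omega>) \<partial>M) = (\<integral>\<omega>. (Y \<omega>)\<^sup>2 \<partial>M) * u * (\<integral>\<omega>. exp (u * - Ys \<omega>) \<partial>M)"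
    by simp
qed (use assms in auto)

theorem theorem2p1:
  fixes M :: "'a measure" and Y Ys :: "'a \<Rightarrow> real" and sigma2 :: real
  assumes "prob_space M"
    and "Y \<in> borel_measurable M" and "Ys \<in> borel_measurable M"
    and "integrable M Y" and "(\<integral>\<omega>. Y \<omega> \<partial>M) = 0"
    and "integrable M (\<lambda>\<omega>. (Y \<omega>)\<^sup>2)"
    and "sigma2 = (\<integral>\<omega>. (Y \<omega>)\<^sup>2 \<partial>M)" and "0 < sigma2"
    and "zero_biased M Y Ys"
  shows
   "(\<forall>c>0. (AE \<omega> in M. Ys \<omega> - Y \<omega> \<le> c) \<and>
        (\<forall>s\<in>{0..<1/c}. integrable M (\<lambda>\<omega>. exp (s * Y \<omega>))) \<longrightarrow>
        (\<forall>t\<ge>0. measure M {\<omega>\<in>space M. Y \<omega> \<ge> t} \<le> exp (- (t\<^sup>2 / (2 * (sigma2 + c * t)))))) \<and>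
    (\<forall>c>0. (AE \<omega> in M. Y \<omega> - Ys \<omega> \<le> c) \<and>
        (\<forall>s\<in>{-1/c<..0}. integrable M (\<lambda>\<omega>. exp (s * Y \<omega>))) \<longrightarrow>
        (\<forall>t\<ge>0. measure M {\<omega>\<in>space M. Y \<omega> \<le> -t} \<le> exp (- (t\<^sup>2 / (2 * (sigma2 + c * t)))))) \<and>
    (\<forall>c>0. (AE \<omega> in M. \<bar>Ys \<omega> - Y \<omega>\<bar> \<le> c) \<and>
        (\<forall>s\<in>{0..<2/c}. integrable M (\<lambda>\<omega>. exp (s * Y \<omega>))) \<longrightarrow>
        (\<forall>t\<ge>0. measure M {\<omega>\<in>space M. Y \<omega> \<ge> t} \<le> exp (- (t\<^sup>2 / (10 * sigma2 / 3 + c * t))))) \<and>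
    (\<forall>c>0. (AE \<omega> in M. \<bar>Ys \<omega> - Y \<omega>\<bar> \<le> c) \<and>
        (\<forall>s\<in>{-2/c<..0}. integrable M (\<lambda>\<omega>. exp (s * Y \<omega>))) \<longrightarrow>
        (\<forall>t\<ge>0. measure M {\<omega>\<in>space M. Y \<omega> \<le> -t} \<le> exp (- (t\<^sup>2 / (10 * sigma2 / 3 + c * t))))) \<and>
    (\<forall>c>0. \<forall>t>exp 1.
        (AE \<omega> in M. Ys \<omega> - Y \<omega> \<le> c) \<and>
        integrable M (\<lambda>\<omega>. exp (((ln t - ln (ln t)) / c) * Y \<omega>)) \<longrightarrow>
        measure M {\<omega>\<in>space M. Y \<omega> \<ge> t}
          \<le> exp (- (t / c) * (ln t - ln (ln t) - sigma2 / c)) \<and>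
        exp (- (t / c) * (ln t - ln (ln t) - sigma2 / c))
          \<le> exp (- (t / (2 * c)) * (ln t - 2 * sigma2 / c))) \<and>
    (\<forall>c>0. \<forall>t>exp 1.
        (AE \<omega> in M. Y \<omega> - Ys \<omega> \<le> c) \<and>
        integrable M (\<lambda>\<omega>. exp (- ((ln t - ln (ln t)) / c) * Y \<omega>)) \<longrightarrow>
        measure M {\<omega>\<in>space M. Y \<omega> \<le> -t}
          \<le> exp (- (t / c) * (ln t - ln (ln t) - sigma2 / c)) \<and>
        exp (- (t / c) * (ln t - ln (ln t) - sigma2 / c))
          \<le> exp (- (t / (2 * c)) * (ln t - 2 * sigma2 / c)))"
proof -
  interpret upper: exp_zero_bias M Y Ys sigma2
    using exp_zero_bias_of_zero_biased[OF assms(1,9,4,3)] assms(7) by simp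
  interpret lower: exp_zero_bias M "\<lambda>\<omega>. - Y \<omega>" "\<lambda>\<omega>. - Ys \<omega>" sigma2
    using exp_zero_bias_of_zero_biased_uminus[OF assms(1,9,4,3)] assms(7) by simp
  have lower_tail: "{\<omega>\<in>space M. Y \<omega> \<le> -t} = {\<omega>\<in>space M. - Y \<omega> \<ge> t}" for t :: real
    by auto
  have reflect: "integrable M (\<lambda>\<omega>. exp (- (s * Y \<omega>)))"
    if "\<forall>s\<in>{-a<..0}. integrable M (\<lambda>\<omega>. exp (s * Y \<omega>))" "0 \<le> s" "s < b" "b \<le> a" for a b s :: real
    using that(1) bspec[OF that(1), of "- s"] that(2-4) by simp
  have abs_le: "(AE \<omega> in M. Ys \<omega> - Y \<omega> \<le> c) \<and> (AE \<omega> in M. - Ys \<omega> - - Y \<omega> \<le> c)"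
    if "AE \<omega> in M. \<bar>Ys \<omega> - Y \<omega>\<bar> \<le> c" for c :: real
    using that by (auto elim: eventually_mono)
  show ?thesis
    unfolding lower_tail
    by (intro conjI allI impI; elim conjE;
        rule upper.tail_le_bernstein lower.tail_le_bernstein upper.tail_le_ten_thirds
          lower.tail_le_ten_thirds upper.tail_le_ln_ln lower.tail_le_ln_ln ln_ln_exponent_le;
        auto dest!: abs_le intro: reflect simp: \<open>0 < sigma2\<close>)
qed

end
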